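(* Let $(X,\|\cdot\|_X)\subset(Y,\|\cdot\|_Y)$ be normed spaces, $\theta,a\ge0$, $m\in\mathbb N_*$. Then $$B_{\alpha,\beta}(X,Y)\subset S_{\theta,m,a}(X,Y)\qquad\text{with }\alpha=\frac{\theta}{2m},\ \beta=2+a+\frac{\theta}{m}.$$
   Context: $B_X(R)=\{x\in X:\|x\|_X\le R\}$, $d_Y(y,A)=\inf_{x\in A}\|y-x\|_Y$, $B_{\alpha,\beta}(X,Y)=\{y\in Y:\limsup_{R\to\infty}R^\alpha(\ln R)^\beta d_Y(y,B_X(R))<\infty\}$. $\pi_{\theta,m,a}(y,(x_n)_n)=\sum_{n\ge1}\big(2^{n\theta}n^a\|y-x_n\|_Y+2^{-2nm}\|x_n\|_X\big)$, $\rho^{X,Y}_{\theta,m,a}(y)=\inf_{(x_n)\subset X}\pi_{\theta,m,a}(y,(x_n)_n)$, $S_{\theta,m,a}(X,Y)=\{y\in Y:\rho^{X,Y}_{\theta,m,a}(y)<\infty\}$. *)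

theory Defs
  imports "HOL-Analysis.Analysis"
begin

definition normed_subspace :: "'y::real_normed_vector set \<Rightarrow> ('y \<Rightarrow> real) \<Rightarrow> bool" where
  "normed_subspace X nX \<longleftrightarrow> subspace X \<and>
     (\<forall>x\<in>X. 0 \<le> nX x) \<and> (\<forall>x\<in>X. nX x = 0 \<longleftrightarrow> x = 0) \<and>
     (\<forall>c. \<forall>x\<in>X. nX (scaleR c x) = \<bar>c\<bar> * nX x) \<and>
     (\<forall>x\<in>X. \<forall>z\<in>X. nX (x + z) \<le> nX x + nX z)"

definition ballX :: "'y set \<Rightarrow> ('y \<Rightarrow> real) \<Rightarrow> real \<Rightarrow> 'y set" where
  "ballX X nX R = {x\<in>X. nX x \<le> R}"

definition distY :: "'y::real_normed_vector \<Rightarrow> 'y set \<Rightarrow> real" where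
  "distY y A = Inf ((\<lambda>x. norm (y - x)) ` A)"

definition Bspace :: "real \<Rightarrow> real \<Rightarrow> 'y::real_normed_vector set \<Rightarrow> ('y \<Rightarrow> real) \<Rightarrow> 'y set" where
  "Bspace \<alpha> \<beta> X nX = {y. Limsup at_top
      (\<lambda>R. ereal (R powr \<alpha> * (ln R) powr \<beta> * distY y (ballX X nX R))) < \<infinity>}"

text \<open>pi_{theta,m,a}(y,(x_n)_{n>=1}); the sequence is indexed so that xs n is x_{n}
  and the sum runs over n >= 1 (xs 0 is unused).\<close>
definition piS :: "real \<Rightarrow> nat \<Rightarrow> real \<Rightarrow> ('y::real_normed_vector \<Rightarrow> real) \<Rightarrow> 'y \<Rightarrow> (nat \<Rightarrow> 'y) \<Rightarrow> ennreal" where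
  "piS \<theta> m a nX y xs = (\<Sum>k. let n = Suc k in
      ennreal (2 powr (real n * \<theta>) * real n powr a * norm (y - xs n)
               + 2 powr (- 2 * real n * real m) * nX (xs n)))"

definition rhoS :: "real \<Rightarrow> nat \<Rightarrow> real \<Rightarrow> 'y::real_normed_vector set \<Rightarrow> ('y \<Rightarrow> real) \<Rightarrow> 'y \<Rightarrow> ennreal" where
  "rhoS \<theta> m a X nX y = (INF xs\<in>{xs. \<forall>n. xs n \<in> X}. piS \<theta> m a nX y xs)"

definition Sspace :: "real \<Rightarrow> nat \<Rightarrow> real \<Rightarrow> 'y::real_normed_vector set \<Rightarrow> ('y \<Rightarrow> real) \<Rightarrow> 'y set" where
  "Sspace \<theta> m a X nX = {y. rhoS \<theta> m a X nX y < \<infinity>}"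

end

theory Submission
  imports Defs "HOL-Real_Asymp.Real_Asymp"
begin

(*
  At level n we use the radius R_n = 2^{2nm} / n^2, chosen so that the penalty
  2^{-2nm} \<parallel>x_n\<parallel>_X of any x_n \<in> B_X(R_n) is at most 1/n^2, and pick x_n \<in> B_X(R_n)
  within the tolerance eps_n = 2^{-n theta} n^{-a-2} of the distance d(y, B_X(R_n)).
  Since ln R_n \<ge> n eventually, the exponents are matched exactly so that
  R_n^alpha n^beta = 2^{n theta} n^a n^2, whence the n-th summand of
  pi_{theta,m,a}(y,(x_n)) is at most (C + 2)/n^2.  Comparison with sum 1/n^2 shows
  that pi is finite, hence so is rho and y \<in> S_{theta,m,a}.
*)

lemma zero_in_ballX:
  assumes "normed_subspace X nX" and "R \<ge> 0"
  shows "0 \<in> ballX X nX R"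
proof -
  have "0 \<in> X" using assms(1) unfolding normed_subspace_def by (simp add: subspace_0)
  moreover have "nX 0 = 0" using assms(1) \<open>0 \<in> X\<close> unfolding normed_subspace_def by blast
  ultimately show ?thesis using assms(2) unfolding ballX_def by simp
qed

lemma distY_nonneg:
  assumes "A \<noteq> {}"
  shows "0 \<le> distY y A"
  unfolding distY_def using assms by (auto intro!: cInf_greatest)

lemma distY_approx:
  assumes "A \<noteq> {}" and "e > 0"
  obtains x where "x \<in> A" and "norm (y - x) < distY y A + e"
proof -
  have "Inf ((\<lambda>x. norm (y - x)) ` A) < distY y A + e"
    using assms(2) unfolding distY_def by simp
  then obtain v where "v \<in> (\<lambda>x. norm (y - x)) ` A" "v < distY y A + e"
    using cInf_lessD assms(1) by (metis image_is_empty)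
  thus ?thesis using that by auto
qed

lemma Bspace_bound:
  assumes "y \<in> Bspace \<alpha> \<beta> X nX"
  obtains R0 C where "\<And>R. R \<ge> R0 \<Longrightarrow> R powr \<alpha> * ln R powr \<beta> * distY y (ballX X nX R) \<le> C"
proof -
  let ?f = "\<lambda>R. R powr \<alpha> * ln R powr \<beta> * distY y (ballX X nX R)"
  have "Limsup at_top (\<lambda>R. ereal (?f R)) < \<infinity>"
    using assms unfolding Bspace_def by simp
  then obtain k :: nat where "Limsup at_top (\<lambda>R. ereal (?f R)) < ereal (real k)"
    using less_PInf_Ex_of_nat by auto
  from Limsup_lessD[OF this] obtain R0 where "\<And>R. R \<ge> R0 \<Longrightarrow> ?f R < real k"
    by (auto simp: eventually_at_top_linorder)
  thus ?thesis using that[of R0 "real k"] by fastforce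
qed

text \<open>The radius R_n, chosen so that 2^{-2nm} R_n = n^{-2}.\<close>
definition radius :: "nat \<Rightarrow> nat \<Rightarrow> real" where
  "radius m n = 2 powr (2 * real n * real m) * real n powr -2"

definition tolerance :: "real \<Rightarrow> real \<Rightarrow> nat \<Rightarrow> real" where
  "tolerance \<theta> a n = 2 powr (- (real n * \<theta>)) * real n powr (-a) * real n powr -2"

lemma radius_nonneg: "radius m n \<ge> 0"
  unfolding radius_def by simp

lemma tolerance_pos: "n \<ge> 1 \<Longrightarrow> tolerance \<theta> a n > 0"
  unfolding tolerance_def by simp

text \<open>The radii grow exponentially: ln R_n = 2nm ln 2 - 2 ln n \<ge> n for large n, since 2 ln 2 > 1.\<close>
lemma ln_radius_ge:
  assumes "m \<ge> 1"
  shows "eventually (\<lambda>n. real n \<le> ln (radius m n)) sequentially"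
proof -
  have "2 * ln 2 > (1::real)"
  proof -
    have "exp 1 < (2::real) ^ 2" using exp_le by simp
    hence "ln (exp 1) < ln ((2::real) ^ 2)" by (subst ln_less_cancel_iff) auto
    thus ?thesis using ln_realpow[of 2 2] by simp
  qed
  moreover have "\<And>c::real. c > 0 \<Longrightarrow> eventually (\<lambda>n::nat. 2 * ln (real n) \<le> c * real n) sequentially"
    by real_asymp
  ultimately have "eventually (\<lambda>n::nat. 2 * ln (real n) \<le> (2 * ln 2 - 1) * real n) sequentially"
    by simp
  hence "eventually (\<lambda>n::nat. real n + 2 * ln (real n) \<le> 2 * ln 2 * real n) sequentially"
    by eventually_elim (simp add: algebra_simps)
  moreover have "eventually (\<lambda>n::nat. n \<ge> 1) sequentially"
    by (rule eventually_ge_at_top)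
  ultimately show ?thesis
  proof eventually_elim
    case (elim n)
    have "2 * ln 2 * real n * 1 \<le> 2 * ln 2 * real n * real m"
      using assms by (intro mult_left_mono) auto
    moreover have "ln (radius m n) = 2 * ln 2 * real n * real m - 2 * ln (real n)"
      using elim unfolding radius_def by (simp add: ln_mult ln_powr algebra_simps)
    ultimately show ?case using elim by linarith
  qed
qed

lemma radius_weight:
  assumes "n \<ge> 1" and "m \<ge> 1"
  shows "radius m n powr (\<theta> / (2 * real m)) * real n powr (2 + a + \<theta> / real m)
           = 2 powr (real n * \<theta>) * real n powr a * real n ^ 2"
proof -
  have m_pos: "real m > 0" using assms(2) by simp
  have "radius m n powr (\<theta> / (2 * real m))
          = 2 powr (2 * real n * real m * (\<theta> / (2 * real m)))
            * real n powr (-2 * (\<theta> / (2 * real m)))"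
    unfolding radius_def by (simp add: powr_mult powr_powr)
  also have "\<dots> = 2 powr (real n * \<theta>) * real n powr (- (\<theta> / real m))"
    using m_pos by simp
  finally have radius_powr:
    "radius m n powr (\<theta> / (2 * real m)) = 2 powr (real n * \<theta>) * real n powr (- (\<theta> / real m))" .
  have "real n powr (- (\<theta> / real m)) * real n powr (2 + a + \<theta> / real m)
          = real n powr (2 + a)"
    by (simp add: powr_add[symmetric])
  also have "\<dots> = real n powr a * real n ^ 2"
    using assms(1) by (simp add: powr_add powr_realpow)
  finally show ?thesis
    unfolding radius_powr by (simp add: mult.assoc)
qed

lemma approximating_sequence:
  assumes "normed_subspace X nX"
  obtains xs where "\<And>n. xs n \<in> ballX X nX (radius m n)"
    and "\<And>n. n \<ge> 1 \<Longrightarrow>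
           norm (y - xs n) < distY y (ballX X nX (radius m n)) + tolerance \<theta> a n"
proof -
  have "\<exists>x. x \<in> ballX X nX (radius m n) \<and>
          (n \<ge> 1 \<longrightarrow> norm (y - x) < distY y (ballX X nX (radius m n)) + tolerance \<theta> a n)" for n
  proof (cases "n \<ge> 1")
    case True
    have "ballX X nX (radius m n) \<noteq> {}"
      using zero_in_ballX[OF assms radius_nonneg] by blast
    with distY_approx[OF this tolerance_pos[OF True]] show ?thesis by metis
  next
    case False
    thus ?thesis using zero_in_ballX[OF assms radius_nonneg] by blast
  qed
  then obtain xs where "\<forall>n. xs n \<in> ballX X nX (radius m n) \<and>
          (n \<ge> 1 \<longrightarrow> norm (y - xs n) < distY y (ballX X nX (radius m n)) + tolerance \<theta> a n)"
    by metis
  thus ?thesis using that by blast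
qed

definition piTerm :: "real \<Rightarrow> nat \<Rightarrow> real \<Rightarrow> ('y::real_normed_vector \<Rightarrow> real) \<Rightarrow> 'y \<Rightarrow> nat \<Rightarrow> 'y \<Rightarrow> real" where
  "piTerm \<theta> m a nX y n x =
     2 powr (real n * \<theta>) * real n powr a * norm (y - x) + 2 powr (- 2 * real n * real m) * nX x"

lemma piTerm_nonneg: "nX x \<ge> 0 \<Longrightarrow> piTerm \<theta> m a nX y n x \<ge> 0"
  unfolding piTerm_def by simp

lemma piS_piTerm:
  "piS \<theta> m a nX y xs = (\<Sum>k. ennreal (piTerm \<theta> m a nX y (Suc k) (xs (Suc k))))"
  unfolding piS_def piTerm_def Let_def ..

lemma piTerm_estimate:
  fixes x y :: "'y::real_normed_vector"
  assumes "n \<ge> 1" and "m \<ge> 1" and "\<theta> \<ge> 0" and "a \<ge> 0"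
    and ln_ge: "real n \<le> ln (radius m n)"
    and bound: "radius m n powr (\<theta> / (2 * real m)) * ln (radius m n) powr (2 + a + \<theta> / real m) * d \<le> C"
    and "d \<ge> 0"
    and close: "norm (y - x) < d + tolerance \<theta> a n"
    and in_ball: "nX x \<le> radius m n"
  shows "piTerm \<theta> m a nX y n x \<le> (C + 2) / real n ^ 2"
proof -
  define Q where "Q = 2 powr (real n * \<theta>) * real n powr a"
  have n_pos: "real n > 0" using assms(1) by simp
  have "Q * real n ^ 2 * d
          = radius m n powr (\<theta> / (2 * real m)) * real n powr (2 + a + \<theta> / real m) * d"
    unfolding Q_def using radius_weight[OF assms(1,2)] by simp
  also have "\<dots> \<le> radius m n powr (\<theta> / (2 * real m)) * ln (radius m n) powr (2 + a + \<theta> / real m) * d"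
    using ln_ge n_pos assms(3,4) \<open>d \<ge> 0\<close>
    by (intro mult_right_mono mult_left_mono powr_mono2) auto
  also have "\<dots> \<le> C"
    by (rule bound)
  finally have Q_dist: "Q * d \<le> C / real n ^ 2"
    using n_pos by (simp add: field_simps)
  have Q_tol: "Q * tolerance \<theta> a n = 1 / real n ^ 2"
    unfolding Q_def tolerance_def using n_pos
    by (simp add: powr_minus powr_realpow field_simps powr_add[symmetric])
  have "Q * norm (y - x) \<le> Q * (d + tolerance \<theta> a n)"
    using close unfolding Q_def by (intro mult_left_mono) auto
  hence approx_part: "Q * norm (y - x) \<le> (C + 1) / real n ^ 2"
    using Q_dist Q_tol by (simp add: distrib_left add_divide_distrib)
  have "2 powr (- 2 * real n * real m) * nX x \<le> 2 powr (- 2 * real n * real m) * radius m n"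
    using in_ball by (intro mult_left_mono) auto
  also have "\<dots> = 1 / real n ^ 2"
    unfolding radius_def using n_pos
    by (simp add: powr_add[symmetric] powr_minus powr_realpow divide_inverse)
  finally have "piTerm \<theta> m a nX y n x \<le> (C + 1) / real n ^ 2 + 1 / real n ^ 2"
    using approx_part unfolding piTerm_def Q_def by linarith
  thus ?thesis by (simp add: add_divide_distrib)
qed

lemma suminf_ennreal_finite_inverse_square:
  fixes t :: "nat \<Rightarrow> real"
  assumes "\<And>n. t n \<ge> 0" and "eventually (\<lambda>n. t n \<le> K / real n ^ 2) sequentially"
  shows "(\<Sum>k. ennreal (t (Suc k))) < \<infinity>"
proof -
  have "summable (\<lambda>n. K * inverse (real n ^ 2))"
    by (intro summable_mult inverse_power_summable) simp
  moreover have "eventually (\<lambda>n. norm (t n) \<le> K * inverse (real n ^ 2)) sequentially"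
    using assms(2) by eventually_elim (use assms(1) in \<open>simp add: divide_inverse\<close>)
  ultimately have "summable t"
    by (rule summable_comparison_test_ev[rotated])
  hence "summable (\<lambda>k. t (Suc k))"
    by (rule summable_Suc_iff[THEN iffD2])
  hence "(\<Sum>k. ennreal (t (Suc k))) = ennreal (\<Sum>k. t (Suc k))"
    using assms(1) by (intro suminf_ennreal2) auto
  thus ?thesis by simp
qed

theorem mainTheorem15:
  fixes X :: "'y::real_normed_vector set" and nX :: "'y \<Rightarrow> real"
    and \<theta> a :: real and m :: nat
  assumes "normed_subspace X nX"
    and "\<theta> \<ge> 0" and "a \<ge> 0" and "m \<ge> 1"
  shows "Bspace (\<theta> / (2 * real m)) (2 + a + \<theta> / real m) X nX \<subseteq> Sspace \<theta> m a X nX"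
proof
  fix y assume "y \<in> Bspace (\<theta> / (2 * real m)) (2 + a + \<theta> / real m) X nX"
  then obtain R0 C where C: "\<And>R. R \<ge> R0 \<Longrightarrow>
      R powr (\<theta> / (2 * real m)) * ln R powr (2 + a + \<theta> / real m) * distY y (ballX X nX R) \<le> C"
    by (elim Bspace_bound) auto
  obtain xs where in_ball: "\<And>n. xs n \<in> ballX X nX (radius m n)"
    and close: "\<And>n. n \<ge> 1 \<Longrightarrow>
                  norm (y - xs n) < distY y (ballX X nX (radius m n)) + tolerance \<theta> a n"
    using approximating_sequence[OF assms(1)] by blast
  have xs_in_X: "xs n \<in> X" for n
    using in_ball[of n] unfolding ballX_def by simp
  have nX_nonneg: "nX (xs n) \<ge> 0" for n
    using assms(1) xs_in_X[of n] unfolding normed_subspace_def by simp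
  have summand_bound:
    "eventually (\<lambda>n. piTerm \<theta> m a nX y n (xs n) \<le> (C + 2) / real n ^ 2) sequentially"
    using ln_radius_ge[OF assms(4)] eventually_ge_at_top[of 1] eventually_ge_at_top[of "nat \<lceil>R0\<rceil>"]
  proof eventually_elim
    case (elim n)
    have "0 < radius m n"
      using elim(2) unfolding radius_def by simp
    hence "R0 \<le> radius m n"
      using elim ln_less_self[of "radius m n"] by linarith
    moreover have "0 \<le> distY y (ballX X nX (radius m n))"
      using zero_in_ballX[OF assms(1) radius_nonneg] by (intro distY_nonneg) blast
    moreover have "nX (xs n) \<le> radius m n"
      using in_ball[of n] unfolding ballX_def by simp
    ultimately show ?case
      using elim close[OF elim(2)] C assms(2-4) by (intro piTerm_estimate) auto
  qed
  have "0 \<le> piTerm \<theta> m a nX y n (xs n)" for n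
    using nX_nonneg by (rule piTerm_nonneg)
  hence "piS \<theta> m a nX y xs < \<infinity>"
    unfolding piS_piTerm using summand_bound by (rule suminf_ennreal_finite_inverse_square)
  moreover have "rhoS \<theta> m a X nX y \<le> piS \<theta> m a nX y xs"
    using xs_in_X unfolding rhoS_def by (intro INF_lower) auto
  ultimately show "y \<in> Sspace \<theta> m a X nX"
    unfolding Sspace_def by simp
qed

end
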